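(* Let $f$ be an axis rule defined for profiles over every finite candidate set, satisfying resistance to cloning, and suppose there are constants $h^*_m,h_m>0$ ($m\ge3$) such that for every finite $C$ with $|C|=m$, $f$ restricted to profiles over $C$ is the scoring rule with $\mathrm{cost}(A,\triangleleft)=0$ if $A$ is an interval of $\triangleleft$, $\mathrm{cost}(A,\triangleleft)=h^*_m$ if $A$ is not an interval of $\triangleleft$ and contains both the leftmost and rightmost candidate of $\triangleleft$, and $\mathrm{cost}(A,\triangleleft)=h_m$ otherwise. Then $h^*_m\le h_m$ for all $m\ge4$.
   Context: Candidates come from a fixed infinite universe. An approval ballot is a nonempty subset $A\subseteq C$; a profile over $C$ is a finite sequence of ballots. An axis is a strict linear order $\triangleleft$ on $C$. A ballot $A$ is an interval of $\triangleleft$ if for all $a,b\in A$ and every $c$ with $a\triangleleft c\triangleleft b$ we have $c\in A$. The scoring rule with cost $\mathrm{cost}$ returns $\arg\min_{\triangleleft}\sum_{A\in P}\mathrm{cost}(A,\triangleleft)$. Two candidates $a,a'$ are clones in $P$ if for every $A\in P$, $a\in A$ iff $a'\in A$. $P_{-c}$ is the profile over $C\setminus\{c\}$ obtained by removing $c$ from every ballot (ballots becoming empty are discarded); $\triangleleft_{-c}$ is the restriction of $\triangleleft$ to $C\setminus\{c\}$. Resistance to cloning: for every profile $P$ with clones $a,a'$, (1) for every $\triangleleft\in f(P)$, $\triangleleft_{-a}\in f(P_{-a})$, and (2) for every $\triangleleft^*\in f(P_{-a})$ there is $\triangleleft\in f(P)$ with $\triangleleft_{-a}=\triangleleft^*$.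 *)

theory Defs
  imports Complex_Main
begin

text \<open>An axis over a finite candidate set C is a strict linear order on C, represented as the
  list of the candidates of C from left to right (distinct, with set equal to C).\<close>

definition profile_over :: "'a set \<Rightarrow> 'a set list \<Rightarrow> bool" where
  "profile_over C P \<longleftrightarrow> (\<forall>A \<in> set P. A \<noteq> {} \<and> A \<subseteq> C)"

definition axes :: "'a set \<Rightarrow> 'a list set" where
  "axes C = {xs. distinct xs \<and> set xs = C}"

definition axis_less :: "'a list \<Rightarrow> 'a \<Rightarrow> 'a \<Rightarrow> bool" where
  "axis_less xs a b \<longleftrightarrow> (\<exists>i j. i < j \<and> j < length xs \<and> xs ! i = a \<and> xs ! j = b)"

definition is_interval :: "'a set \<Rightarrow> 'a list \<Rightarrow> bool" where
  "is_interval A xs \<longleftrightarrow>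
     (\<forall>a \<in> A. \<forall>b \<in> A. \<forall>c. axis_less xs a c \<and> axis_less xs c b \<longrightarrow> c \<in> A)"

definition scoring_rule ::
  "('a set \<Rightarrow> 'a list \<Rightarrow> real) \<Rightarrow> 'a set \<Rightarrow> 'a set list \<Rightarrow> 'a list set" where
  "scoring_rule cost C P =
     {xs \<in> axes C. \<forall>ys \<in> axes C. (\<Sum>A\<leftarrow>P. cost A xs) \<le> (\<Sum>A\<leftarrow>P. cost A ys)}"

definition interval_cost :: "real \<Rightarrow> real \<Rightarrow> 'a set \<Rightarrow> 'a list \<Rightarrow> real" where
  "interval_cost hstar h A xs =
     (if is_interval A xs then 0
      else if hd xs \<in> A \<and> last xs \<in> A then hstar else h)"

definition clones :: "'a set list \<Rightarrow> 'a \<Rightarrow> 'a \<Rightarrow> bool" where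
  "clones P a a' \<longleftrightarrow> (\<forall>A \<in> set P. a \<in> A \<longleftrightarrow> a' \<in> A)"

definition remove_cand :: "'a \<Rightarrow> 'a set list \<Rightarrow> 'a set list" where
  "remove_cand c P = filter (\<lambda>A. A \<noteq> {}) (map (\<lambda>A. A - {c}) P)"

definition restrict_axis :: "'a \<Rightarrow> 'a list \<Rightarrow> 'a list" where
  "restrict_axis c xs = removeAll c xs"

definition resistant_to_cloning :: "('a set \<Rightarrow> 'a set list \<Rightarrow> 'a list set) \<Rightarrow> bool" where
  "resistant_to_cloning f \<longleftrightarrow>
     (\<forall>C P a a'. finite C \<and> profile_over C P \<and> a \<in> C \<and> a' \<in> C \<and> a \<noteq> a' \<and> clones P a a' \<longrightarrow>
        (\<forall>xs \<in> f C P. restrict_axis a xs \<in> f (C - {a}) (remove_cand a P)) \<and>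
        (\<forall>ys \<in> f (C - {a}) (remove_cand a P). \<exists>xs \<in> f C P. restrict_axis a xs = ys))"

end

theory Submission
  imports Defs
begin

text \<open>Take m + 1 candidates c0, c1, c2, a and a nonempty list D, and the profile with ballots
  {c0, c1}, {c0, c2} and B, the set of all candidates but c0. The first two ballots can only both be
  intervals if c0 sits between c1 and c2, and then B is not an interval; so every axis costs at
  least min h*_(m+1) h_(m+1), and this minimum is attained by c0 c2 D c1 a (cost h_(m+1)) or by
  c1 c0 c2 a D (cost h*_(m+1)). Now a is a clone of every d in D, and deleting a turns either of
  these axes into one of cost h*_m for the reduced profile, which also has the axis c0 c2 c1 D of
  cost h_m. Resistance to cloning makes the restricted axis optimal, whence h*_m \<le> h_m.\<close>

abbreviation profile_cost ::
  "('a set \<Rightarrow> 'a list \<Rightarrow> real) \<Rightarrow> 'a set list \<Rightarrow> 'a list \<Rightarrow> real" where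
  "profile_cost cost P xs \<equiv> \<Sum>A\<leftarrow>P. cost A xs"

lemma axis_less_nthI: "i < j \<Longrightarrow> j < length xs \<Longrightarrow> axis_less xs (xs ! i) (xs ! j)"
  unfolding axis_less_def by blast

lemma axis_less_total:
  assumes "x \<in> set xs" "y \<in> set xs" "x \<noteq> y"
  shows "axis_less xs x y \<or> axis_less xs y x"
proof -
  obtain i j where "i < length xs" "xs ! i = x" "j < length xs" "xs ! j = y"
    using assms(1,2) by (metis in_set_conv_nth)
  moreover have "i \<noteq> j"
    using \<open>xs ! i = x\<close> \<open>xs ! j = y\<close> assms(3) by blast
  ultimately show ?thesis
    using axis_less_nthI[of i j xs] axis_less_nthI[of j i xs] by (auto simp: neq_iff)
qed

lemma not_is_interval_if_between:
  "axis_less xs x c \<Longrightarrow> axis_less xs c y \<Longrightarrow> x \<in> A \<Longrightarrow> y \<in> A \<Longrightarrow> c \<notin> A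
    \<Longrightarrow> \<not> is_interval A xs"
  unfolding is_interval_def by blast

lemma not_is_interval_nthI:
  "i < j \<Longrightarrow> j < k \<Longrightarrow> k < length xs \<Longrightarrow> xs ! i \<in> A \<Longrightarrow> xs ! k \<in> A
    \<Longrightarrow> xs ! j \<notin> A \<Longrightarrow> \<not> is_interval A xs"
  using axis_less_nthI[of i j xs] axis_less_nthI[of j k xs] not_is_interval_if_between[of xs]
  by simp

lemma nth_mem_segment_iff:
  assumes "distinct (us @ vs @ ws)" "k < length (us @ vs @ ws)"
  shows "(us @ vs @ ws) ! k \<in> set vs \<longleftrightarrow> length us \<le> k \<and> k < length us + length vs"
proof
  assume "(us @ vs @ ws) ! k \<in> set vs"
  then obtain p where p: "p < length vs" "vs ! p = (us @ vs @ ws) ! k"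
    by (metis in_set_conv_nth)
  then have "(us @ vs @ ws) ! (length us + p) = (us @ vs @ ws) ! k"
    by (simp add: nth_append)
  moreover have "length us + p < length (us @ vs @ ws)"
    using p(1) by simp
  ultimately have "length us + p = k"
    using nth_eq_iff_index_eq[OF assms(1)] assms(2) by blast
  with p(1) show "length us \<le> k \<and> k < length us + length vs" by simp
next
  assume "length us \<le> k \<and> k < length us + length vs"
  then obtain p where "k = length us + p" "p < length vs"
    by (metis add_less_cancel_left le_add_diff_inverse)
  then show "(us @ vs @ ws) ! k \<in> set vs"
    by (simp add: nth_append_length_plus nth_append)
qed

lemma is_interval_segment:
  assumes "distinct (us @ vs @ ws)"
  shows "is_interval (set vs) (us @ vs @ ws)"
  unfolding is_interval_def
proof (intro ballI allI impI)
  let ?xs = "us @ vs @ ws"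
  fix x y c
  assume "x \<in> set vs" "y \<in> set vs" "axis_less ?xs x c \<and> axis_less ?xs c y"
  then obtain i j j' k where ij: "i < j" "j < length ?xs" "?xs ! i = x" "?xs ! j = c"
    and jk: "j' < k" "k < length ?xs" "?xs ! j' = c" "?xs ! k = y"
    unfolding axis_less_def by blast
  have "j = j'"
    using ij jk nth_eq_iff_index_eq[OF assms, of j j'] by simp
  moreover have "length us \<le> i" "k < length us + length vs"
    using ij jk \<open>x \<in> set vs\<close> \<open>y \<in> set vs\<close> nth_mem_segment_iff[OF assms] by auto
  ultimately show "c \<in> set vs"
    using ij jk nth_mem_segment_iff[OF assms, of j] by simp
qed

lemma not_is_interval_separated:
  assumes "c0 \<in> set ys" "c1 \<in> set ys" "c2 \<in> set ys" "c1 \<noteq> c2"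
    "is_interval {c0, c1} ys" "is_interval {c0, c2} ys" "c1 \<in> B" "c2 \<in> B" "c0 \<notin> B"
  shows "\<not> is_interval B ys"
proof -
  have "c0 \<noteq> c1" "c0 \<noteq> c2" using assms(7-9) by auto
  then have "axis_less ys c0 c1 \<or> axis_less ys c1 c0" "axis_less ys c0 c2 \<or> axis_less ys c2 c0"
    "axis_less ys c1 c2 \<or> axis_less ys c2 c1"
    using assms(1-4) axis_less_total by metis+
  moreover have "\<not> (axis_less ys c0 c1 \<and> axis_less ys c1 c2)"
    "\<not> (axis_less ys c2 c1 \<and> axis_less ys c1 c0)"
    using not_is_interval_if_between[of ys _ c1 _ "{c0, c2}"] assms(4,6) \<open>c0 \<noteq> c1\<close> by auto
  moreover have "\<not> (axis_less ys c0 c2 \<and> axis_less ys c2 c1)"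
    "\<not> (axis_less ys c1 c2 \<and> axis_less ys c2 c0)"
    using not_is_interval_if_between[of ys _ c2 _ "{c0, c1}"] assms(4,5) \<open>c0 \<noteq> c2\<close> by auto
  ultimately have
    "axis_less ys c1 c0 \<and> axis_less ys c0 c2 \<or> axis_less ys c2 c0 \<and> axis_less ys c0 c1"
    by blast
  then show ?thesis
    using not_is_interval_if_between[of ys c1 c0 c2 B] not_is_interval_if_between[of ys c2 c0 c1 B]
      assms(7-9) by blast
qed

definition triangle_profile :: "'a \<Rightarrow> 'a \<Rightarrow> 'a \<Rightarrow> 'a set \<Rightarrow> 'a set list" where
  "triangle_profile c0 c1 c2 B = [{c0, c1}, {c0, c2}, B]"

lemma triangle_profile_cost_lower_bound:
  assumes "c0 \<in> set ys" "c1 \<in> set ys" "c2 \<in> set ys" "c1 \<noteq> c2"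
    and "c1 \<in> B" "c2 \<in> B" "c0 \<notin> B" "0 < hs" "0 < hh"
  shows "min hs hh \<le> profile_cost (interval_cost hs hh) (triangle_profile c0 c1 c2 B) ys"
proof -
  let ?K = "\<lambda>A. interval_cost hs hh A ys"
  have lower: "\<not> is_interval A ys \<Longrightarrow> min hs hh \<le> ?K A" for A
    by (simp add: interval_cost_def)
  have nonneg: "0 \<le> ?K A" for A
    using assms(8,9) by (simp add: interval_cost_def)
  have "\<not> is_interval {c0, c1} ys \<or> \<not> is_interval {c0, c2} ys \<or> \<not> is_interval B ys"
    using not_is_interval_separated[OF assms(1-4) _ _ assms(5-7)] by blast
  then have "min hs hh \<le> ?K {c0, c1} + ?K {c0, c2} + ?K B"
    using lower nonneg by (smt (verit))
  then show ?thesis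
    by (simp add: triangle_profile_def)
qed

lemma triangle_profile_cost_hd_c0:
  assumes "distinct (c0 # c2 # R)" "c1 \<in> set R"
  shows "profile_cost (interval_cost hs hh) (triangle_profile c0 c1 c2 (insert c2 (set R)))
    (c0 # c2 # R) = (if last R = c1 then hs else hh)"
proof -
  obtain k where "k < length R" "R ! k = c1"
    using assms(2) by (metis in_set_conv_nth)
  then have "\<not> is_interval {c0, c1} (c0 # c2 # R)"
    using assms(1) by (intro not_is_interval_nthI[of 0 1 "k + 2"]) auto
  moreover have "is_interval {c0, c2} (c0 # c2 # R)"
    using is_interval_segment[of "[]" "[c0, c2]" R] assms(1) by simp
  moreover have "is_interval (insert c2 (set R)) (c0 # c2 # R)"
    using is_interval_segment[of "[c0]" "c2 # R" "[]"] assms(1) by simp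
  moreover have "R \<noteq> []" using assms(2) by auto
  ultimately show ?thesis
    using assms by (auto simp: triangle_profile_def interval_cost_def)
qed

lemma triangle_profile_cost_hd_c1:
  assumes "distinct (c1 # c0 # c2 # R)" "R \<noteq> []"
  shows "profile_cost (interval_cost hs hh)
    (triangle_profile c0 c1 c2 (insert c1 (insert c2 (set R)))) (c1 # c0 # c2 # R) = hs"
proof -
  have "is_interval {c0, c1} (c1 # c0 # c2 # R)"
    using is_interval_segment[of "[]" "[c1, c0]" "c2 # R"] assms(1) by (simp add: insert_commute)
  moreover have "is_interval {c0, c2} (c1 # c0 # c2 # R)"
    using is_interval_segment[of "[c1]" "[c0, c2]" R] assms(1) by simp
  moreover have "\<not> is_interval (insert c1 (insert c2 (set R))) (c1 # c0 # c2 # R)"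
    using assms(1) by (intro not_is_interval_nthI[of 0 1 2]) auto
  ultimately show ?thesis
    using assms by (simp add: triangle_profile_def interval_cost_def)
qed

lemma triangle_clone_profile_optimum:
  assumes "distinct (c0 # c1 # c2 # a # D)" "D \<noteq> []" "0 < hs" "0 < hh"
  shows "\<exists>xs \<in> {c0 # c2 # D @ [c1, a], c1 # c0 # c2 # a # D}.
    xs \<in> scoring_rule (interval_cost hs hh) (set (c0 # c1 # c2 # a # D))
      (triangle_profile c0 c1 c2 (insert a (insert c1 (insert c2 (set D)))))"
proof -
  let ?C = "set (c0 # c1 # c2 # a # D)"
  let ?P = "triangle_profile c0 c1 c2 (insert a (insert c1 (insert c2 (set D))))"
  let ?cost = "profile_cost (interval_cost hs hh) ?P"
  have lower: "min hs hh \<le> ?cost ys" if "ys \<in> axes ?C" for ys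
    using that assms(1,3,4) by (intro triangle_profile_cost_lower_bound) (auto simp: axes_def)
  have optimal: "xs \<in> scoring_rule (interval_cost hs hh) ?C ?P"
    if "xs \<in> axes ?C" "?cost xs = min hs hh" for xs
    using that lower unfolding scoring_rule_def by simp
  have "?cost (c0 # c2 # D @ [c1, a]) = hh"
    using triangle_profile_cost_hd_c0[of c0 c2 "D @ [c1, a]" c1 hs hh] assms(1)
    by (auto simp: insert_commute)
  moreover have "?cost (c1 # c0 # c2 # a # D) = hs"
    using triangle_profile_cost_hd_c1[of c1 c0 c2 "a # D" hs hh] assms(1)
    by (auto simp: insert_commute)
  moreover have "c0 # c2 # D @ [c1, a] \<in> axes ?C" "c1 # c0 # c2 # a # D \<in> axes ?C"
    using assms(1) by (auto simp: axes_def)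
  ultimately show ?thesis
    using optimal by (cases "hh \<le> hs") (simp_all add: min_def)
qed

lemma triangle_profile_optimal_axes_imp_le:
  assumes "distinct (c0 # c1 # c2 # D)" "D \<noteq> []"
    and "xs \<in> {c0 # c2 # D @ [c1], c1 # c0 # c2 # D}"
    and "xs \<in> scoring_rule (interval_cost hs hh) (set (c0 # c1 # c2 # D))
      (triangle_profile c0 c1 c2 (insert c1 (insert c2 (set D))))"
  shows "hs \<le> hh"
proof -
  let ?P = "triangle_profile c0 c1 c2 (insert c1 (insert c2 (set D)))"
  let ?cost = "profile_cost (interval_cost hs hh) ?P"
  have "?cost xs = hs"
    using assms(1,2,3) triangle_profile_cost_hd_c0[of c0 c2 "D @ [c1]" c1 hs hh]
      triangle_profile_cost_hd_c1[of c1 c0 c2 D hs hh]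
    by (auto simp: insert_commute)
  moreover have "?cost (c0 # c2 # c1 # D) = hh"
    using assms(1,2) triangle_profile_cost_hd_c0[of c0 c2 "c1 # D" c1 hs hh]
    by (auto simp: insert_commute)
  moreover have "c0 # c2 # c1 # D \<in> axes (set (c0 # c1 # c2 # D))"
    using assms(1) by (auto simp: axes_def)
  ultimately show ?thesis
    using assms(4) unfolding scoring_rule_def by fastforce
qed

lemma triangle_clone_profile:
  assumes "distinct (c0 # c1 # c2 # a # D)" "d \<in> set D"
  defines "P \<equiv> triangle_profile c0 c1 c2 (insert a (insert c1 (insert c2 (set D))))"
  shows "profile_over (set (c0 # c1 # c2 # a # D)) P" "clones P a d"
    and "remove_cand a P = triangle_profile c0 c1 c2 (insert c1 (insert c2 (set D)))"
    and "profile_over (set (c0 # c1 # c2 # D)) (remove_cand a P)"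
proof -
  show "profile_over (set (c0 # c1 # c2 # a # D)) P" "clones P a d"
    using assms by (auto simp: P_def profile_over_def clones_def triangle_profile_def)
  show *: "remove_cand a P = triangle_profile c0 c1 c2 (insert c1 (insert c2 (set D)))"
    using assms(1) by (simp add: P_def remove_cand_def triangle_profile_def insert_Diff_if)
  show "profile_over (set (c0 # c1 # c2 # D)) (remove_cand a P)"
    unfolding * by (auto simp: profile_over_def triangle_profile_def)
qed

lemma resistant_to_cloningD:
  assumes "resistant_to_cloning f" "finite C" "profile_over C P" "a \<in> C" "a' \<in> C" "a \<noteq> a'"
    "clones P a a'" "xs \<in> f C P"
  shows "restrict_axis a xs \<in> f (C - {a}) (remove_cand a P)"
  using assms(1)[unfolded resistant_to_cloning_def, rule_format, of C P a a'] assms(2-) by blast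

lemma infinite_UNIV_distinct_list:
  assumes "infinite (UNIV :: 'a set)"
  obtains xs :: "'a list" where "distinct xs" "length xs = n"
proof -
  obtain S :: "'a set" where "finite S" "card S = n"
    using infinite_arbitrarily_large[OF assms] by blast
  moreover obtain xs where "set xs = S" "distinct xs"
    using finite_distinct_list[OF \<open>finite S\<close>] by blast
  ultimately show ?thesis
    using that distinct_card by metis
qed

theorem mainTheorem16:
  fixes f :: "'a set \<Rightarrow> 'a set list \<Rightarrow> 'a list set"
    and hstar h :: "nat \<Rightarrow> real"
  assumes "infinite (UNIV :: 'a set)"
    and "resistant_to_cloning f"
    and "\<forall>m \<ge> 3. hstar m > 0 \<and> h m > 0"
    and "\<forall>C P. finite C \<and> card C \<ge> 3 \<and> profile_over C P \<longrightarrow>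
           f C P = scoring_rule (interval_cost (hstar (card C)) (h (card C))) C P"
  shows "\<forall>m \<ge> 4. hstar m \<le> h m"
proof (intro allI impI)
  fix m :: nat
  assume "4 \<le> m"
  obtain cs :: "'a list" where "distinct cs" "length cs = Suc (Suc (Suc (Suc (m - 3))))"
    using infinite_UNIV_distinct_list[OF assms(1)] by blast
  then obtain c0 c1 c2 a D
    where dist: "distinct (c0 # c1 # c2 # a # D :: 'a list)" and "length D = m - 3"
    by (auto simp: length_Suc_conv simp del: distinct.simps)
  with \<open>4 \<le> m\<close> have "D \<noteq> []" by auto
  let ?C = "set (c0 # c1 # c2 # a # D)" and ?C' = "set (c0 # c1 # c2 # D)"
  let ?P = "triangle_profile c0 c1 c2 (insert a (insert c1 (insert c2 (set D))))"
  note profile = triangle_clone_profile[OF dist hd_in_set[OF \<open>D \<noteq> []\<close>]]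
  have card: "card ?C = Suc m" "card ?C' = m" and "?C - {a} = ?C'"
    using \<open>length D = m - 3\<close> \<open>4 \<le> m\<close> dist by (auto simp: distinct_card)
  obtain xs where xs: "xs \<in> {c0 # c2 # D @ [c1, a], c1 # c0 # c2 # a # D}" "xs \<in> f ?C ?P"
    using triangle_clone_profile_optimum[OF dist \<open>D \<noteq> []\<close>, of "hstar (Suc m)" "h (Suc m)"]
      assms(3,4) card profile(1) \<open>4 \<le> m\<close> by auto
  then have "restrict_axis a xs \<in> f ?C' (remove_cand a ?P)"
    using resistant_to_cloningD[OF assms(2) _ profile(1) _ _ _ profile(2)] dist \<open>?C - {a} = ?C'\<close>
      hd_in_set[OF \<open>D \<noteq> []\<close>] by auto
  moreover have "f ?C' (remove_cand a ?P)
      = scoring_rule (interval_cost (hstar m) (h m)) ?C' (remove_cand a ?P)"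
    using assms(4) card(2) profile(4) \<open>4 \<le> m\<close> by simp
  moreover have "restrict_axis a xs \<in> {c0 # c2 # D @ [c1], c1 # c0 # c2 # D}"
    using xs(1) dist by (auto simp: restrict_axis_def)
  ultimately show "hstar m \<le> h m"
    using triangle_profile_optimal_axes_imp_le[of c0 c1 c2 D "restrict_axis a xs"] dist
      \<open>D \<noteq> []\<close> profile(3) by simp
qed

end
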